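(* For every $1\le i\le n$ and $1\le j\le n-1$, the elements $\tau_i$ and $\sigma_i$ of $\hat\Lambda$ are invariant under $s_j$ (exchange of $a_j$ and $a_{j+1}$ in the coefficients).
   Context: Fix $n\ge2$. $R(T)=\mathbb{Z}[e^{\pm a_1},\dots,e^{\pm a_n}]/(e^{a_1+\cdots+a_n}-1)$, $b_i=1-e^{-a_i}$. $\hat\Lambda$: symmetric formal power series in $y=(y_1,y_2,\dots)$ with coefficients in the fraction field of $R(T)$; $\Omega(b_i|y)=\prod_{j\ge1}(1-b_iy_j)^{-1}$. $Z=(z_{pq})$ is the $n\times n$ upper triangular matrix with $z_{pp}=\Omega(b_p|y)$ and $z_{pq}=\frac{z_{p,q-1}-z_{p+1,q}}{e^{-a_q}-e^{-a_p}}$ for $p<q$. $A$: upper triangular with diagonal $(e^{-a_1},\dots,e^{-a_n})$, $-1$ on the superdiagonal, $0$ elsewhere. $P$: lower unitriangular with $P_{pq}=e_{p-q}(e^{-a_1},\dots,e^{-a_{p-1}})$. $\sigma_i=\det(ZP)_{[1,i]}^{[1,i]}$, $\tau_i=\det(ZAP)_{[1,i]}^{[1,i]}$ (leading principal minors). *)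

theory Defs
  imports "HOL-Library.Poly_Mapping" "HOL-Combinatorics.Permutations"
begin

text \<open>Formal power series in the variables y_1, y_2, ... with coefficients in a field 'a:
  a series is the function sending a monomial y^m (m :: nat =>0 nat, finitely supported
  exponent vector) to its coefficient.\<close>
type_synonym 'a ps = "(nat \<Rightarrow>\<^sub>0 nat) \<Rightarrow> 'a"

definition mono_deg :: "(nat \<Rightarrow>\<^sub>0 nat) \<Rightarrow> nat" where
  "mono_deg m = (\<Sum>k\<in>Poly_Mapping.keys m. Poly_Mapping.lookup m k)"

definition ps_one :: "'a::field ps" where
  "ps_one = (\<lambda>m. if m = 0 then 1 else 0)"

definition ps_mult :: "'a::field ps \<Rightarrow> 'a ps \<Rightarrow> 'a ps" where
  "ps_mult f g = (\<lambda>m. \<Sum>(m1, m2) \<in> {(m1, m2). m1 + m2 = m}. f m1 * g m2)"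

text \<open>Omega(b|y) = prod_j (1 - b y_j)^(-1); its coefficient at y^m is b^(|m|).\<close>
definition Omega :: "'a::field \<Rightarrow> 'a ps" where
  "Omega b = (\<lambda>m. b ^ mono_deg m)"

definition ps_det :: "nat \<Rightarrow> (nat \<Rightarrow> nat \<Rightarrow> 'a::field ps) \<Rightarrow> 'a ps" where
  "ps_det k M = (\<lambda>m. \<Sum>\<pi> \<in> {\<pi>. \<pi> permutes {1..k}}.
      of_int (sign \<pi>) * foldr ps_mult (map (\<lambda>r. M r (\<pi> r)) [1..<Suc k]) ps_one m)"

text \<open>x p plays the role of e^{-a_p}; b_p = 1 - x p.
  zz x d p is the entry z_{p,p+d} of the matrix Z.\<close>
fun zz :: "(nat \<Rightarrow> 'a::field) \<Rightarrow> nat \<Rightarrow> nat \<Rightarrow> 'a ps" where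
  "zz x 0 p = Omega (1 - x p)"
| "zz x (Suc d) p = (\<lambda>m. (zz x d p m - zz x d (Suc p) m) / (x (p + Suc d) - x p))"

definition Zmat :: "(nat \<Rightarrow> 'a::field) \<Rightarrow> nat \<Rightarrow> nat \<Rightarrow> 'a ps" where
  "Zmat x p q = (if p \<le> q then zz x (q - p) p else (\<lambda>_. 0))"

definition Amat :: "(nat \<Rightarrow> 'a::field) \<Rightarrow> nat \<Rightarrow> nat \<Rightarrow> 'a" where
  "Amat x p q = (if q = p then x p else if q = Suc p then -1 else 0)"

definition esym :: "nat \<Rightarrow> (nat \<Rightarrow> 'a::field) \<Rightarrow> nat \<Rightarrow> 'a" where
  "esym k x r = (\<Sum>T \<in> {T. T \<subseteq> {1..r} \<and> card T = k}. \<Prod>t\<in>T. x t)"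

definition Pmat :: "(nat \<Rightarrow> 'a::field) \<Rightarrow> nat \<Rightarrow> nat \<Rightarrow> 'a" where
  "Pmat x p q = (if q \<le> p then esym (p - q) x (p - 1) else 0)"

definition ps_mat_scal :: "nat \<Rightarrow> (nat \<Rightarrow> nat \<Rightarrow> 'a::field ps) \<Rightarrow> (nat \<Rightarrow> nat \<Rightarrow> 'a)
    \<Rightarrow> nat \<Rightarrow> nat \<Rightarrow> 'a ps" where
  "ps_mat_scal n M C p q = (\<lambda>m. \<Sum>k=1..n. M p k m * C k q)"

definition scal_mat :: "nat \<Rightarrow> (nat \<Rightarrow> nat \<Rightarrow> 'a::field) \<Rightarrow> (nat \<Rightarrow> nat \<Rightarrow> 'a)
    \<Rightarrow> nat \<Rightarrow> nat \<Rightarrow> 'a" where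
  "scal_mat n B C p q = (\<Sum>k=1..n. B p k * C k q)"

definition sigma :: "nat \<Rightarrow> (nat \<Rightarrow> 'a::field) \<Rightarrow> nat \<Rightarrow> 'a ps" where
  "sigma n x i = ps_det i (ps_mat_scal n (Zmat x) (Pmat x))"

definition tau :: "nat \<Rightarrow> (nat \<Rightarrow> 'a::field) \<Rightarrow> nat \<Rightarrow> 'a ps" where
  "tau n x i = ps_det i (ps_mat_scal n (Zmat x) (scal_mat n (Amat x) (Pmat x)))"

definition swp :: "nat \<Rightarrow> (nat \<Rightarrow> 'a) \<Rightarrow> nat \<Rightarrow> 'a" where
  "swp j x = x(j := x (Suc j), Suc j := x j)"

end

theory Submission
  imports Defs
begin

text \<open>Write x' = swp j x, \<delta> = x (j+1) - x j and E = I + \<delta> E_(j+1,j). Then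
  P(x') = E P(x), A(x') E = E A(x) and Z(x') E = E Z(x) on the index range 1..n. The last
  relation holds because z_pq is the divided difference of t \<mapsto> (1 - t)^|m| at the nodes
  x_p, ..., x_q, which is symmetric in the nodes and satisfies the divided difference
  recurrence. Hence Z(x') P(x') = E Z(x) P(x) and Z(x') A(x') P(x') = E Z(x) A(x) P(x), and
  left multiplication by E, which adds \<delta> times row j to row j+1, changes no leading
  principal minor.\<close>

section \<open>Products of series\<close>

lemma finite_decompositions:
  fixes m :: "'k \<Rightarrow>\<^sub>0 nat"
  shows "finite {(m1, m2). m1 + m2 = m}"
proof -
  define N where "N = (\<Sum>k\<in>Poly_Mapping.keys m. Poly_Mapping.lookup m k)"
  let ?below = "{m1 :: 'k \<Rightarrow>\<^sub>0 nat. \<forall>k. Poly_Mapping.lookup m1 k \<le> Poly_Mapping.lookup m k}"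
  have bound: "Poly_Mapping.lookup m k \<le> N" for k
    by (cases "k \<in> Poly_Mapping.keys m") (auto simp: N_def in_keys_iff intro: member_le_sum)
  have "Poly_Mapping.lookup ` ?below \<subseteq>
      {f. \<forall>k. (k \<in> Poly_Mapping.keys m \<longrightarrow> f k \<in> {..N}) \<and> (k \<notin> Poly_Mapping.keys m \<longrightarrow> f k = 0)}"
    using bound by (auto simp: in_keys_iff intro: order_trans) (metis le_zero_eq)
  then have "finite (Poly_Mapping.lookup ` ?below)"
    by (rule finite_subset) (intro finite_set_of_finite_funs; simp)
  then have "finite ?below"
    by (rule finite_imageD) (simp add: inj_on_def)
  moreover have "{(m1, m2). m1 + m2 = m} \<subseteq> (\<lambda>m1. (m1, m - m1)) ` ?below"
    by (auto simp: lookup_add)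
  ultimately show ?thesis
    by (meson finite_imageI finite_subset)
qed

lemma ps_mult_left_commute:
  "ps_mult f (ps_mult g h) = ps_mult g (ps_mult f (h :: 'a::field ps))"
proof
  fix m
  let ?D = "\<lambda>m. {(m1, m2). m1 + m2 = m}"
  have triple_sum: "ps_mult f (ps_mult g h) m =
      (\<Sum>(u, v)\<in>Sigma (?D m) (\<lambda>u. ?D (snd u)). f (fst u) * (g (fst v) * h (snd v)))"
    for f g h :: "'a ps"
  proof -
    have "ps_mult f (ps_mult g h) m =
        (\<Sum>u\<in>?D m. \<Sum>v\<in>?D (snd u). f (fst u) * (g (fst v) * h (snd v)))"
      unfolding ps_mult_def by (simp add: sum_distrib_left case_prod_unfold)
    also have "\<dots> = (\<Sum>(u, v)\<in>Sigma (?D m) (\<lambda>u. ?D (snd u)). f (fst u) * (g (fst v) * h (snd v)))"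
      by (intro sum.Sigma ballI finite_decompositions)
    finally show ?thesis .
  qed
  show "ps_mult f (ps_mult g h) m = ps_mult g (ps_mult f h) m"
    unfolding triple_sum
    by (rule sum.reindex_bij_witness[where i = "\<lambda>((m1, m2), (m3, m4)). ((m3, m1 + m4), (m1, m4))"
          and j = "\<lambda>((m1, m2), (m3, m4)). ((m3, m1 + m4), (m1, m4))"])
      (auto simp: algebra_simps)
qed

lemma ps_mult_add_scaled_left:
  "ps_mult (\<lambda>m. u m + c * v m) g = (\<lambda>m. ps_mult u g m + c * ps_mult v g m)"
  unfolding ps_mult_def by (auto simp: sum.distrib sum_distrib_left algebra_simps case_prod_beta)

lemma ps_mult_add_scaled_right:
  "ps_mult g (\<lambda>m. u m + c * v m) = (\<lambda>m. ps_mult g u m + c * ps_mult g v m)"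
  unfolding ps_mult_def by (auto simp: sum.distrib sum_distrib_left algebra_simps case_prod_beta)

lemma foldr_ps_mult_swap:
  "foldr ps_mult (xs @ u # v # ys) (z :: 'a::field ps) = foldr ps_mult (xs @ v # u # ys) z"
  by (induction xs) (simp_all add: ps_mult_left_commute)

lemma foldr_ps_mult_add_scaled:
  fixes f :: "'i \<Rightarrow> 'a::field ps"
  assumes "b \<in> set xs" "distinct xs"
  shows "foldr ps_mult (map (f(b := (\<lambda>m. u m + c * v m))) xs) z =
    (\<lambda>m. foldr ps_mult (map (f(b := u)) xs) z m + c * foldr ps_mult (map (f(b := v)) xs) z m)"
  using assms
proof (induction xs)
  case (Cons a xs)
  show ?case
  proof (cases "a = b")
    case True
    with Cons.prems have tail: "map (f(b := w)) xs = map f xs" for w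
      by (intro map_cong) auto
    from True show ?thesis by (simp add: tail fun_upd_same ps_mult_add_scaled_left del: fun_upd_apply)
  next
    case False
    with Cons show ?thesis by (simp add: ps_mult_add_scaled_right)
  qed
qed simp

section \<open>Determinants of matrices of series\<close>

lemma ps_det_cong:
  assumes "\<And>p q. p \<in> {1..k} \<Longrightarrow> q \<in> {1..k} \<Longrightarrow> M p q = N p q"
  shows "ps_det k M = ps_det k N"
proof -
  have "map (\<lambda>r. M r (\<pi> r)) [1..<Suc k] = map (\<lambda>r. N r (\<pi> r)) [1..<Suc k]"
    if "\<pi> permutes {1..k}" for \<pi>
    using assms permutes_in_image[OF that] by (intro map_cong) auto
  then show ?thesis
    unfolding ps_det_def by (intro ext sum.cong) (simp_all only: mem_Collect_eq)
qed

lemma ps_det_row_linear: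
  assumes "r \<in> {1..k}"
  shows "ps_det k (M(r := (\<lambda>q m. U q m + c * V q m))) =
    (\<lambda>m. ps_det k (M(r := U)) m + c * ps_det k (M(r := V)) m)"
proof
  fix m
  let ?term = "\<lambda>M \<pi>. foldr ps_mult (map (\<lambda>s. M s (\<pi> s)) [1..<Suc k]) ps_one m"
  have "?term (M(r := (\<lambda>q m. U q m + c * V q m))) \<pi> =
      ?term (M(r := U)) \<pi> + c * ?term (M(r := V)) \<pi>" for \<pi>
  proof -
    have upd: "(\<lambda>s. (M(r := W)) s (\<pi> s)) = (\<lambda>s. M s (\<pi> s))(r := W (\<pi> r))" for W
      by auto
    have "r \<in> set [1..<Suc k]"
      using assms by auto
    from fun_cong[OF foldr_ps_mult_add_scaled[OF this distinct_upt], of _ "U (\<pi> r)" c "V (\<pi> r)" ps_one m]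
    show ?thesis
      by (simp only: upd)
  qed
  then show "ps_det k (M(r := (\<lambda>q m. U q m + c * V q m))) m =
      ps_det k (M(r := U)) m + c * ps_det k (M(r := V)) m"
    unfolding ps_det_def by (simp add: algebra_simps sum.distrib sum_distrib_left)
qed

text \<open>The even/odd split avoids cancelling a sum against its negative, which would fail in
  characteristic 2.\<close>
lemma sum_sign_permutes_eq_0:
  fixes T :: "('i \<Rightarrow> 'i) \<Rightarrow> 'b::comm_ring_1"
  assumes "finite A" "a \<in> A" "b \<in> A" "a \<noteq> b"
    and invariant: "\<And>\<pi>. T (\<pi> \<circ> Transposition.transpose a b) = T \<pi>"
  shows "(\<Sum>\<pi>\<in>{\<pi>. \<pi> permutes A}. of_int (sign \<pi>) * T \<pi>) = 0"
proof -
  define \<tau> where "\<tau> = Transposition.transpose a b"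
  define f where "f \<pi> = of_int (sign \<pi>) * T \<pi>" for \<pi>
  let ?even = "{\<pi>. \<pi> permutes A \<and> evenperm \<pi>}"
  let ?odd = "{\<pi>. \<pi> permutes A \<and> \<not> evenperm \<pi>}"
  have \<tau>: "\<tau> permutes A" "\<tau> \<circ> \<tau> = id" "\<not> evenperm \<tau>"
    using assms by (auto simp: \<tau>_def permutes_swap_id evenperm_swap)
  have flip: "\<pi> \<circ> \<tau> permutes A \<and> evenperm (\<pi> \<circ> \<tau>) = (\<not> evenperm \<pi>)" if "\<pi> permutes A" for \<pi>
    using that \<tau> assms(1) by (simp add: permutes_compose evenperm_comp permutes_imp_permutation)
  have fin: "finite {\<pi>. \<pi> permutes A}"
    using assms(1) by (rule finite_permutations)
  have "(\<Sum>\<pi>\<in>{\<pi>. \<pi> permutes A}. f \<pi>) = sum f ?even + sum f ?odd"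
    by (subst sum.union_disjoint[symmetric])
      (auto intro: finite_subset[OF _ fin] arg_cong[where f = "sum f"])
  also have "sum f ?odd = (\<Sum>\<pi>\<in>?even. f (\<pi> \<circ> \<tau>))"
    by (rule sum.reindex_bij_witness[where i = "\<lambda>\<pi>. \<pi> \<circ> \<tau>" and j = "\<lambda>\<pi>. \<pi> \<circ> \<tau>"])
      (auto simp: comp_assoc \<tau>(2) flip)
  also have "sum f ?even + \<dots> = (\<Sum>\<pi>\<in>?even. f \<pi> + f (\<pi> \<circ> \<tau>))"
    by (rule sum.distrib[symmetric])
  also have "\<dots> = 0"
  proof (rule sum.neutral, clarify)
    fix \<pi> assume "\<pi> permutes A" "evenperm \<pi>"
    then have "sign (\<pi> \<circ> \<tau>) = - sign \<pi>"
      using \<tau> assms(1) by (simp add: sign_def flip)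
    then show "f \<pi> + f (\<pi> \<circ> \<tau>) = 0"
      unfolding f_def \<tau>_def invariant by simp
  qed
  finally show ?thesis unfolding f_def .
qed

lemma upt_split_adjacent:
  assumes "1 \<le> a" "Suc a \<le> k"
  shows "[1..<Suc k] = [1..<a] @ a # Suc a # [Suc (Suc a)..<Suc k]"
  using assms upt_add_eq_append[of 1 a "Suc k - a"] by (simp add: upt_conv_Cons)

lemma ps_det_eq_0_if_adjacent_rows_eq:
  assumes "1 \<le> a" "Suc a \<le> k" "M (Suc a) = M a"
  shows "ps_det k M = (\<lambda>_. 0)"
proof
  fix m
  define \<tau> where "\<tau> = Transposition.transpose a (Suc a)"
  let ?rows = "\<lambda>\<pi> xs. map (\<lambda>r. M r (\<pi> r)) xs"
  have unmoved: "?rows (\<pi> \<circ> \<tau>) [c..<d] = ?rows \<pi> [c..<d]"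
    if "a \<notin> {c..<d}" "Suc a \<notin> {c..<d}" for \<pi> c d
    using that by (intro map_cong) (auto simp: \<tau>_def)
  have "foldr ps_mult (?rows (\<pi> \<circ> \<tau>) [1..<Suc k]) ps_one = foldr ps_mult (?rows \<pi> [1..<Suc k]) ps_one"
    for \<pi>
  proof -
    have "?rows (\<pi> \<circ> \<tau>) [1..<Suc k] =
        ?rows \<pi> [1..<a] @ M a (\<pi> (Suc a)) # M a (\<pi> a) # ?rows \<pi> [Suc (Suc a)..<Suc k]"
      unfolding upt_split_adjacent[OF assms(1,2)]
      using unmoved[of 1 a \<pi>] unmoved[of "Suc (Suc a)" "Suc k" \<pi>]
      by (simp add: \<tau>_def assms(3) del: upt_Suc)
    moreover have "?rows \<pi> [1..<Suc k] =
        ?rows \<pi> [1..<a] @ M a (\<pi> a) # M a (\<pi> (Suc a)) # ?rows \<pi> [Suc (Suc a)..<Suc k]"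
      unfolding upt_split_adjacent[OF assms(1,2)] by (simp add: assms(3) del: upt_Suc)
    ultimately show ?thesis
      by (simp only: foldr_ps_mult_swap)
  qed
  then show "ps_det k M m = 0"
    unfolding ps_det_def using assms
    by (intro sum_sign_permutes_eq_0[where a = a and b = "Suc a"]) (simp_all add: \<tau>_def)
qed

section \<open>Elementary row operations\<close>

definition add_row :: "nat \<Rightarrow> 'a::comm_ring_1 \<Rightarrow> (nat \<Rightarrow> nat \<Rightarrow> 'a) \<Rightarrow> nat \<Rightarrow> nat \<Rightarrow> 'a"
  where
  "add_row j c M p q = M p q + (if p = Suc j then c * M j q else 0)"

definition add_col :: "nat \<Rightarrow> 'a::comm_ring_1 \<Rightarrow> (nat \<Rightarrow> nat \<Rightarrow> 'a) \<Rightarrow> nat \<Rightarrow> nat \<Rightarrow> 'a"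
  where
  "add_col j c M p q = M p q + (if q = j then c * M p (Suc j) else 0)"

lemma scal_mat_add_row_left:
  "scal_mat n (add_row j c C) B p q = add_row j c (scal_mat n C B) p q"
  by (simp add: scal_mat_def add_row_def sum.distrib sum_distrib_left algebra_simps)

lemma scal_mat_add_row_right:
  assumes "1 \<le> j" "Suc j \<le> n"
  shows "scal_mat n C (add_row j c B) p q = scal_mat n (add_col j c C) B p q"
proof -
  have "scal_mat n C (add_row j c B) p q =
      (\<Sum>k=1..n. C p k * B k q + (if k = Suc j then C p (Suc j) * (c * B j q) else 0))"
    unfolding scal_mat_def add_row_def by (intro sum.cong) (auto simp: distrib_left)
  also have "\<dots> = (\<Sum>k=1..n. C p k * B k q + (if k = j then c * C p (Suc j) * B j q else 0))"
    using assms by (simp add: sum.distrib)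
  also have "\<dots> = scal_mat n (add_col j c C) B p q"
    unfolding scal_mat_def add_col_def by (intro sum.cong) (auto simp: distrib_right)
  finally show ?thesis .
qed

lemma scal_mat_intertwine:
  assumes "1 \<le> j" "Suc j \<le> n"
    and "\<And>k. k \<in> {1..n} \<Longrightarrow> add_col j c C' p k = add_row j c C p k"
  shows "scal_mat n C' (add_row j c B) p q = add_row j c (scal_mat n C B) p q"
proof -
  have "scal_mat n C' (add_row j c B) p q = scal_mat n (add_col j c C') B p q"
    using assms(1,2) by (rule scal_mat_add_row_right)
  also have "\<dots> = scal_mat n (add_row j c C) B p q"
    using assms(3) by (simp add: scal_mat_def)
  also have "\<dots> = add_row j c (scal_mat n C B) p q"
    by (rule scal_mat_add_row_left)
  finally show ?thesis .
qed

lemma ps_mat_scal_eq_scal_mat: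
  "ps_mat_scal n M C p q m = scal_mat n (\<lambda>p q. M p q m) C p q"
  by (simp add: ps_mat_scal_def scal_mat_def)

lemma ps_det_add_row:
  fixes M M' :: "nat \<Rightarrow> nat \<Rightarrow> 'a::field ps"
  assumes "1 \<le> j"
    and "\<And>p q m. p \<in> {1..k} \<Longrightarrow> q \<in> {1..k} \<Longrightarrow> M' p q m = add_row j c (\<lambda>p q. M p q m) p q"
  shows "ps_det k M' = ps_det k M"
proof (cases "Suc j \<le> k")
  case True
  have "ps_det k M' = ps_det k (M(Suc j := (\<lambda>q m. M (Suc j) q m + c * M j q m)))"
    using assms(2) by (intro ps_det_cong) (auto simp: add_row_def)
  also have "\<dots> = (\<lambda>m. ps_det k (M(Suc j := M (Suc j))) m + c * ps_det k (M(Suc j := M j)) m)"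
    using True by (intro ps_det_row_linear) simp
  also have "ps_det k (M(Suc j := M j)) = (\<lambda>_. 0)"
    using assms(1) True by (intro ps_det_eq_0_if_adjacent_rows_eq) auto
  finally show ?thesis
    by simp
next
  case False
  with assms(2) show ?thesis
    by (intro ps_det_cong) (auto simp: add_row_def)
qed

section \<open>Divided differences\<close>

text \<open>This is (-1)^(card S - 1) times the usual divided difference; in this normalisation z_pq is
  exactly the divided difference of t \<mapsto> (1 - t)^|m| over the nodes x_p, ..., x_q.\<close>

definition divided_diff :: "('a::field \<Rightarrow> 'a) \<Rightarrow> ('i \<Rightarrow> 'a) \<Rightarrow> 'i set \<Rightarrow> 'a" where
  "divided_diff g x S = (\<Sum>k\<in>S. g (x k) / (\<Prod>l\<in>S - {k}. x l - x k))"

lemma divided_diff_singleton [simp]: "divided_diff g x {k} = g (x k)"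
  by (simp add: divided_diff_def)

lemma prod_node_diffs_remove:
  assumes "finite T" "c \<in> T" "k \<noteq> c"
  shows "(\<Prod>l\<in>T - {k}. x l - x k) = (x c - x k) * (\<Prod>l\<in>T - {c} - {k}. x l - x k)"
  using assms by (subst prod.remove[of _ c]) (auto simp: Diff_insert2 [symmetric] insert_commute)

lemma divided_diff_recurrence:
  fixes g :: "'a::field \<Rightarrow> 'a" and x :: "'i \<Rightarrow> 'a"
  assumes "finite S" "inj_on x S" "a \<in> S" "b \<in> S" "a \<noteq> b"
  shows "divided_diff g x S * (x b - x a) = divided_diff g x (S - {b}) - divided_diff g x (S - {a})"
proof -
  define w where "w T k = g (x k) / (\<Prod>l\<in>T - {k}. x l - x k)" for T k
  have ne: "x c - x k \<noteq> 0" if "c \<in> S" "k \<in> S" "c \<noteq> k" for c k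
    using assms(2) that by (auto dest: inj_onD)
  have w_remove: "w T k = w (T - {c}) k / (x c - x k)" if "T \<subseteq> S" "c \<in> T" "k \<noteq> c" for T c k
    using prod_node_diffs_remove[OF rev_finite_subset[OF assms(1) that(1)] that(2,3), of x]
    by (simp add: w_def mult.commute)
  have term_diff: "w S k * (x b - x a) =
      (if k = b then 0 else w (S - {b}) k) - (if k = a then 0 else w (S - {a}) k)" if "k \<in> S" for k
  proof -
    consider "k = a" | "k = b" | "k \<noteq> a" "k \<noteq> b" by blast
    then show ?thesis
    proof cases
      case 1
      then show ?thesis using assms w_remove[of S b a] ne[of b a] by simp
    next
      case 2
      then show ?thesis using assms w_remove[of S a b] ne[of a b] by (simp add: field_simps)
    next
      case 3
      define W where "W = w (S - {a} - {b}) k"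
      have "S - {b} - {a} = S - {a} - {b}"
        by auto
      then have wb: "w (S - {b}) k = W / (x a - x k)" and wa: "w (S - {a}) k = W / (x b - x k)"
        using 3 w_remove[of "S - {b}" a k] w_remove[of "S - {a}" b k] assms by (auto simp: W_def)
      have wS: "w S k = w (S - {b}) k / (x b - x k)"
        using 3 w_remove[of S b k] assms by auto
      have "w S k * (x b - x a) = W / (x a - x k) - W / (x b - x k)"
        unfolding wS wb using 3 that assms ne[of a k] ne[of b k] by (simp add: field_simps)
      with 3 show ?thesis
        by (simp add: wa wb)
    qed
  qed
  have sum_skip: "(\<Sum>k\<in>S. if k = c then 0 else f k) = sum f (S - {c})" for c and f :: "'i \<Rightarrow> 'a"
    using assms(1) by (simp add: sum.If_cases Diff_eq)
  have "divided_diff g x S * (x b - x a) = (\<Sum>k\<in>S. w S k * (x b - x a))"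
    by (simp add: divided_diff_def w_def sum_distrib_right)
  also have "\<dots> = (\<Sum>k\<in>S. (if k = b then 0 else w (S - {b}) k) - (if k = a then 0 else w (S - {a}) k))"
    by (rule sum.cong) (simp_all only: term_diff)
  also have "\<dots> = divided_diff g x (S - {b}) - divided_diff g x (S - {a})"
    by (simp only: sum_subtractf sum_skip) (simp add: divided_diff_def w_def)
  finally show ?thesis .
qed

lemma divided_diff_reindex:
  assumes "inj_on \<sigma> S"
  shows "divided_diff g (x \<circ> \<sigma>) S = divided_diff g x (\<sigma> ` S)"
proof -
  have "(\<Prod>l\<in>S - {k}. x (\<sigma> l) - x (\<sigma> k)) = (\<Prod>l\<in>\<sigma> ` S - {\<sigma> k}. x l - x (\<sigma> k))" if "k \<in> S" for k
  proof -
    have "\<sigma> ` S - {\<sigma> k} = \<sigma> ` (S - {k})"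
      using assms that by (auto dest: inj_onD)
    then show ?thesis
      using assms by (simp add: prod.reindex inj_on_diff)
  qed
  then show ?thesis
    using assms by (simp add: divided_diff_def sum.reindex)
qed

lemma zz_eq_divided_diff:
  assumes "inj_on x {p..p + d}"
  shows "zz x d p m = divided_diff (\<lambda>t. (1 - t) ^ mono_deg m) x {p..p + d}"
  using assms
proof (induction d arbitrary: p)
  case 0
  then show ?case by (simp add: Omega_def)
next
  case (Suc d)
  let ?D = "divided_diff (\<lambda>t. (1 - t) ^ mono_deg m) x"
  have "?D {p..p + Suc d} * (x (p + Suc d) - x p) =
      ?D ({p..p + Suc d} - {p + Suc d}) - ?D ({p..p + Suc d} - {p})"
    using Suc.prems by (intro divided_diff_recurrence) auto
  also have "{p..p + Suc d} - {p + Suc d} = {p..p + d}" by auto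
  also have "{p..p + Suc d} - {p} = {Suc p..Suc p + d}" by auto
  finally have recurrence:
    "?D {p..p + Suc d} * (x (p + Suc d) - x p) = ?D {p..p + d} - ?D {Suc p..Suc p + d}" .
  have "x (p + Suc d) - x p \<noteq> 0"
    using Suc.prems by (auto dest: inj_onD)
  then have "?D {p..p + Suc d} = (?D {p..p + d} - ?D {Suc p..Suc p + d}) / (x (p + Suc d) - x p)"
    using recurrence by (simp add: eq_divide_eq)
  moreover have "inj_on x {p..p + d}" "inj_on x {Suc p..Suc p + d}"
    using Suc.prems by (auto intro: inj_on_subset)
  ultimately show ?case
    using Suc.IH by simp
qed

lemma Zmat_eq_divided_diff:
  assumes "inj_on x {p..q}"
  shows "Zmat x p q m = (if p \<le> q then divided_diff (\<lambda>t. (1 - t) ^ mono_deg m) x {p..q} else 0)"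
  using assms zz_eq_divided_diff[of x p "q - p" m] by (simp add: Zmat_def)

section \<open>Elementary symmetric polynomials\<close>

lemma esym_0 [simp]: "esym 0 y r = 1"
proof -
  have "T = {}" if "T \<subseteq> {1..r}" "card T = 0" for T
    using that finite_subset[OF that(1)] by auto
  then have "{T. T \<subseteq> {1..r} \<and> card T = 0} = {{}}"
    by auto
  then show ?thesis
    by (simp add: esym_def)
qed

lemma esym_cong:
  assumes "\<And>t. t \<in> {1..r} \<Longrightarrow> y t = z t"
  shows "esym k y r = esym k z r"
  unfolding esym_def using assms by (intro sum.cong prod.cong) auto

lemma subsets_card_Suc_insert:
  assumes "finite A" "a \<notin> A"
  shows "{T. T \<subseteq> insert a A \<and> card T = Suc k} =
    {T. T \<subseteq> A \<and> card T = Suc k} \<union> insert a ` {T. T \<subseteq> A \<and> card T = k}"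
proof (intro equalityI subsetI)
  fix T assume T: "T \<in> {T. T \<subseteq> insert a A \<and> card T = Suc k}"
  then have "finite T"
    using assms(1) by (auto intro: finite_subset)
  with T show "T \<in> {T. T \<subseteq> A \<and> card T = Suc k} \<union> insert a ` {T. T \<subseteq> A \<and> card T = k}"
    by (cases "a \<in> T") (auto simp: image_iff subset_insert_iff intro!: exI[of _ "T - {a}"])
next
  fix T assume "T \<in> {T. T \<subseteq> A \<and> card T = Suc k} \<union> insert a ` {T. T \<subseteq> A \<and> card T = k}"
  with assms show "T \<in> {T. T \<subseteq> insert a A \<and> card T = Suc k}"
    by (auto simp: card_insert_if rev_finite_subset[OF assms(1)])
qed

lemma esym_Suc: "esym (Suc k) y (Suc r) = esym (Suc k) y r + y (Suc r) * esym k y r"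
proof -
  let ?F = "\<lambda>k. {T. T \<subseteq> {1..r} \<and> card T = k}"
  have split: "{T. T \<subseteq> {1..Suc r} \<and> card T = Suc k} = ?F (Suc k) \<union> insert (Suc r) ` ?F k"
    using subsets_card_Suc_insert[of "{1..r}" "Suc r" k] by (simp add: atLeastAtMostSuc_conv)
  have fin: "finite (?F k')" for k'
    by (rule finite_subset[of _ "Pow {1..r}"]) auto
  have inj: "inj_on (insert (Suc r)) (?F k)"
  proof (rule inj_onI)
    fix T U assume "T \<in> ?F k" "U \<in> ?F k" and eq: "insert (Suc r) T = insert (Suc r) U"
    then have "Suc r \<notin> T" "Suc r \<notin> U"
      by auto
    with eq show "T = U"
      by (simp add: insert_ident)
  qed
  have "esym (Suc k) y (Suc r) = esym (Suc k) y r + (\<Sum>T\<in>insert (Suc r) ` ?F k. \<Prod>t\<in>T. y t)"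
    unfolding esym_def split using fin by (subst sum.union_disjoint) auto
  also have "(\<Sum>T\<in>insert (Suc r) ` ?F k. \<Prod>t\<in>T. y t) = (\<Sum>T\<in>?F k. y (Suc r) * (\<Prod>t\<in>T. y t))"
    using inj by (simp add: sum.reindex) (intro sum.cong refl prod.insert; auto intro: finite_subset)
  finally show ?thesis
    by (simp add: esym_def sum_distrib_left)
qed

lemma esym_permute:
  assumes "\<sigma> permutes {1..r}"
  shows "esym k (y \<circ> \<sigma>) r = esym k y r"
proof -
  let ?F = "{T. T \<subseteq> {1..r} \<and> card T = k}"
  have closed: "f ` T \<subseteq> {1..r}" and card: "card (f ` T) = card T"
    if "f permutes {1..r}" "T \<subseteq> {1..r}" for f T
    using that permutes_in_image[OF that(1)] card_image[OF inj_on_subset[OF permutes_inj[OF that(1)]]]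
    by auto
  have "esym k (y \<circ> \<sigma>) r = (\<Sum>T\<in>?F. \<Prod>t\<in>\<sigma> ` T. y t)"
    unfolding esym_def
    by (intro sum.cong refl) (simp add: prod.reindex inj_on_subset[OF permutes_inj[OF assms]])
  also have "\<dots> = esym k y r"
    unfolding esym_def
    using closed[OF assms] card[OF assms] closed[OF permutes_inv[OF assms]] card[OF permutes_inv[OF assms]]
    by (intro sum.reindex_bij_witness[where i = "image (inv \<sigma>)" and j = "image \<sigma>"])
      (auto simp: image_comp permutes_inv_o[OF assms])
  finally show ?thesis .
qed

section \<open>Exchanging x j and x (j+1)\<close>

lemma swp_eq_comp_transpose: "swp j x = x \<circ> Transposition.transpose j (Suc j)"
  by (auto simp: swp_def transpose_def)

lemma Zmat_swp_eq_divided_diff: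
  fixes x :: "nat \<Rightarrow> 'a::field"
  assumes "inj_on x {1..n}" "1 \<le> j" "Suc j \<le> n" "1 \<le> p" "q \<le> n"
  shows "Zmat (swp j x) p q m = (if p \<le> q
    then divided_diff (\<lambda>t. (1 - t) ^ mono_deg m) x (Transposition.transpose j (Suc j) ` {p..q}) else 0)"
proof -
  define \<tau> where "\<tau> = Transposition.transpose j (Suc j)"
  have "\<tau> ` {p..q} \<subseteq> {1..n}"
    using assms by (auto simp: \<tau>_def transpose_def)
  then have "inj_on (x \<circ> \<tau>) {p..q}"
    by (intro comp_inj_on inj_on_subset[OF assms(1)]) (simp_all add: \<tau>_def)
  then show ?thesis
    unfolding swp_eq_comp_transpose \<tau>_def[symmetric]
    by (simp add: Zmat_eq_divided_diff divided_diff_reindex \<tau>_def)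
qed

lemma Zmat_swp_intertwine:
  fixes x :: "nat \<Rightarrow> 'a::field"
  assumes inj: "inj_on x {1..n}" and j: "1 \<le> j" "Suc j \<le> n" and pq: "p \<in> {1..n}" "q \<in> {1..n}"
  shows "add_col j (x (Suc j) - x j) (\<lambda>p q. Zmat (swp j x) p q m) p q =
    add_row j (x (Suc j) - x j) (\<lambda>p q. Zmat x p q m) p q"
proof -
  define \<tau> where "\<tau> = Transposition.transpose j (Suc j)"
  define D where "D = divided_diff (\<lambda>t. (1 - t) ^ mono_deg m) x"
  define \<delta> where "\<delta> = x (Suc j) - x j"
  have Z: "Zmat x p' q' m = (if p' \<le> q' then D {p'..q'} else 0)" if "1 \<le> p'" "q' \<le> n" for p' q'
    unfolding D_def using that by (intro Zmat_eq_divided_diff inj_on_subset[OF inj]) auto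
  have Z': "Zmat (swp j x) p' q' m = (if p' \<le> q' then D (\<tau> ` {p'..q'}) else 0)"
    if "1 \<le> p'" "q' \<le> n" for p' q'
    unfolding D_def \<tau>_def using inj j that by (rule Zmat_swp_eq_divided_diff)
  have recurrence: "D S * \<delta> = D (S - {Suc j}) - D (S - {j})"
    if "S \<subseteq> {1..n}" "j \<in> S" "Suc j \<in> S" for S
    unfolding D_def \<delta>_def using that
    by (intro divided_diff_recurrence inj_on_subset[OF inj]) (auto intro: finite_subset)
  txt \<open>{p..q} is \<tau>-invariant unless it contains exactly one of j, j+1, i.e. unless q = j or
    p = j+1; in those two cases the recurrence supplies the correction term.\<close>
  consider (corner) "p = Suc j" "q = j" | (left) "q = j" "p \<le> j" | (right) "p = Suc j" "Suc j \<le> q"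
    | (below) "q < p" "\<not> (p = Suc j \<and> q = j)" | (generic) "p \<le> q" "q \<noteq> j" "p \<noteq> Suc j"
    by linarith
  then have "add_col j \<delta> (\<lambda>p q. Zmat (swp j x) p q m) p q = add_row j \<delta> (\<lambda>p q. Zmat x p q m) p q"
  proof cases
    case corner
    then show ?thesis
      using j by (simp add: add_col_def add_row_def Z Z' \<tau>_def)
  next
    case left
    define S where "S = {p..Suc j}"
    have "{p..j} = S - {Suc j}" "\<tau> ` {p..j} = S - {j}" "\<tau> ` S = S"
      using left by (auto simp: S_def \<tau>_def in_transpose_image_iff transpose_def)
    then show ?thesis
      using left j pq recurrence[of S] by (simp add: add_col_def add_row_def Z Z' S_def algebra_simps)
  next
    case right
    define S where "S = {j..q}"
    have "{Suc j..q} = S - {j}" "\<tau> ` {Suc j..q} = S - {Suc j}"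
      using right by (auto simp: S_def \<tau>_def in_transpose_image_iff transpose_def)
    then show ?thesis
      using right j pq recurrence[of S] by (simp add: add_col_def add_row_def Z Z' S_def algebra_simps)
  next
    case below
    then show ?thesis
      using j pq by (auto simp: add_col_def add_row_def Z Z')
  next
    case generic
    then have "\<tau> ` {p..q} = {p..q}"
      unfolding \<tau>_def by (intro transpose_image_eq) auto
    then show ?thesis
      using generic pq by (simp add: add_col_def add_row_def Z Z')
  qed
  then show ?thesis
    unfolding \<delta>_def .
qed

lemma Amat_swp_intertwine:
  "add_col j (x (Suc j) - x j) (Amat (swp j x)) = add_row j (x (Suc j) - x j) (Amat x)"
  by (auto simp: fun_eq_iff add_col_def add_row_def Amat_def swp_def algebra_simps)

lemma Pmat_swp:
  fixes x :: "nat \<Rightarrow> 'a::field"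
  assumes "1 \<le> j"
  shows "Pmat (swp j x) = add_row j (x (Suc j) - x j) (Pmat x)"
proof (intro ext)
  fix p q
  consider (before) "p \<le> j" | (at) "p = Suc j" | (after) "Suc j < p"
    by linarith
  then show "Pmat (swp j x) p q = add_row j (x (Suc j) - x j) (Pmat x) p q"
  proof cases
    case before
    then have "esym k (swp j x) (p - 1) = esym k x (p - 1)" for k
      by (intro esym_cong) (auto simp: swp_def)
    with before show ?thesis
      by (simp add: Pmat_def add_row_def)
  next
    case after
    then have "Transposition.transpose j (Suc j) permutes {1..p - 1}"
      using assms by (intro permutes_swap_id) auto
    then have "esym k (swp j x) (p - 1) = esym k x (p - 1)" for k
      by (simp add: swp_eq_comp_transpose esym_permute)
    with after show ?thesis
      by (simp add: Pmat_def add_row_def)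
  next
    case at
    obtain r where r: "j = Suc r"
      using assms by (cases j) auto
    have agree: "esym k (swp (Suc r) x) r = esym k x r" for k
      by (intro esym_cong) (auto simp: swp_def r)
    consider (le) "q \<le> j" | (eq) "q = Suc j" | (gt) "Suc j < q"
      by linarith
    then show ?thesis
    proof cases
      case le
      then obtain k where k: "Suc j - q = Suc k" "j - q = k"
        by (simp add: Suc_diff_le)
      have "Pmat (swp j x) p q = esym (Suc k) x r + x (Suc j) * esym k x r"
        using at le k by (simp add: Pmat_def r esym_Suc agree) (simp add: swp_def r)
      also have "\<dots> = (esym (Suc k) x r + x j * esym k x r) + (x (Suc j) - x j) * esym k x r"
        by (simp add: algebra_simps)
      also have "\<dots> = add_row j (x (Suc j) - x j) (Pmat x) p q"
        using at le k by (simp add: Pmat_def add_row_def r esym_Suc)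
      finally show ?thesis .
    qed (use at in \<open>simp_all add: Pmat_def add_row_def\<close>)
  qed
qed

theorem corollary5p3:
  fixes x :: "nat \<Rightarrow> 'a::field" and n i j :: nat
  assumes "n \<ge> 2"
    and "\<forall>p\<in>{1..n}. \<forall>q\<in>{1..n}. p \<noteq> q \<longrightarrow> x p \<noteq> x q"
    and "(\<Prod>p=1..n. x p) = 1"
    and "1 \<le> i" and "i \<le> n" and "1 \<le> j" and "j \<le> n - 1"
  shows "tau n (swp j x) i = tau n x i \<and> sigma n (swp j x) i = sigma n x i"
proof -
  define \<delta> where "\<delta> = x (Suc j) - x j"
  have j: "1 \<le> j" "Suc j \<le> n"
    using assms by auto
  have inj: "inj_on x {1..n}"
    using assms(2) by (auto intro: inj_onI)
  have P: "Pmat (swp j x) = add_row j \<delta> (Pmat x)"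
    unfolding \<delta>_def using j(1) by (rule Pmat_swp)
  have AP: "scal_mat n (Amat (swp j x)) (Pmat (swp j x)) = add_row j \<delta> (scal_mat n (Amat x) (Pmat x))"
    unfolding P \<delta>_def by (intro ext scal_mat_intertwine[OF j]) (simp add: Amat_swp_intertwine)
  have ZB: "ps_mat_scal n (Zmat (swp j x)) (add_row j \<delta> B) p q m =
      add_row j \<delta> (\<lambda>p q. ps_mat_scal n (Zmat x) B p q m) p q" if "p \<in> {1..n}" for B p q m
    unfolding ps_mat_scal_eq_scal_mat \<delta>_def
    using that by (intro scal_mat_intertwine[OF j] Zmat_swp_intertwine[OF inj j]) auto
  have "ps_det i (ps_mat_scal n (Zmat (swp j x)) (add_row j \<delta> B)) = ps_det i (ps_mat_scal n (Zmat x) B)" for B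
    by (rule ps_det_add_row[OF j(1)], rule ZB) (use assms(5) in auto)
  then show ?thesis
    unfolding tau_def sigma_def AP unfolding P by simp
qed

end
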